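(* Let $R$ be a semisimple 2-primal ring. Then $R$ satisfies the complete radical formula if and only if $R$ satisfies the radical formula.
   Context: Rings are associative with identity; modules are unital left modules. $R$ is semisimple if ${}_RR$ is a direct sum of simple submodules; 2-primal if its set of nilpotent elements equals its prime radical. For an $R$-module $M$: a submodule $P$ is prime if $RM\not\subseteq P$ and for every ideal $A$ of $R$ and submodule $K$ with $AK\subseteq P$, $K\subseteq P$ or $AM\subseteq P$; completely prime if $RM\not\subseteq P$ and $rm\in P$ implies $m\in P$ or $rM\subseteq P$. $\beta^s(N)$ (resp. $\beta^s_{co}(N)$) is the intersection of all prime (resp. completely prime) submodules containing $N$ ($=M$ if none). $E_M(N)=\{rm: r^km\in N\text{ for some }k\in\mathbb N\}$, $\langle E_M(N)\rangle$ the submodule generated. $R$ satisfies the radical formula (resp. complete radical formula) if for every $R$-module $M$ and every submodule $N$, $\langle E_M(N)\rangle=\beta^s(N)$ (resp. $=\beta^s_{co}(N)$). *)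

theory Defs
  imports "HOL-Algebra.Algebra"
begin

text \<open>Unital left modules over a (not necessarily commutative) ring R, using the
  record type module of HOL-Algebra (whose locale requires commutativity, hence
  we use only its axioms part).\<close>

definition lmodule :: "('a, 'c) ring_scheme \<Rightarrow> ('a, 'm) module \<Rightarrow> bool" where
  "lmodule R M \<longleftrightarrow> ring R \<and> abelian_group M \<and> module_axioms R M"

definition submod :: "('a, 'c) ring_scheme \<Rightarrow> ('a, 'm) module \<Rightarrow> 'm set \<Rightarrow> bool" where
  "submod R M N \<longleftrightarrow> N \<subseteq> carrier M \<and> \<zero>\<^bsub>M\<^esub> \<in> N
     \<and> (\<forall>x\<in>N. \<forall>y\<in>N. x \<oplus>\<^bsub>M\<^esub> y \<in> N)
     \<and> (\<forall>r\<in>carrier R. \<forall>x\<in>N. r \<odot>\<^bsub>M\<^esub> x \<in> N)"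

definition mspan :: "('a, 'c) ring_scheme \<Rightarrow> ('a, 'm) module \<Rightarrow> 'm set \<Rightarrow> 'm set" where
  "mspan R M S = carrier M \<inter> \<Inter>{N. submod R M N \<and> S \<subseteq> N}"

definition smul_set :: "('a, 'm) module \<Rightarrow> 'a set \<Rightarrow> 'm set \<Rightarrow> 'm set" where
  "smul_set M A K = {a \<odot>\<^bsub>M\<^esub> k | a k. a \<in> A \<and> k \<in> K}"

definition prod_sm :: "('a, 'c) ring_scheme \<Rightarrow> ('a, 'm) module \<Rightarrow> 'a set \<Rightarrow> 'm set \<Rightarrow> 'm set" where
  "prod_sm R M A K = mspan R M (smul_set M A K)"

definition prime_submod :: "('a, 'c) ring_scheme \<Rightarrow> ('a, 'm) module \<Rightarrow> 'm set \<Rightarrow> bool" where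
  "prime_submod R M P \<longleftrightarrow> submod R M P
     \<and> \<not> prod_sm R M (carrier R) (carrier M) \<subseteq> P
     \<and> (\<forall>A K. ideal A R \<and> submod R M K \<and> prod_sm R M A K \<subseteq> P
              \<longrightarrow> K \<subseteq> P \<or> prod_sm R M A (carrier M) \<subseteq> P)"

definition cprime_submod :: "('a, 'c) ring_scheme \<Rightarrow> ('a, 'm) module \<Rightarrow> 'm set \<Rightarrow> bool" where
  "cprime_submod R M P \<longleftrightarrow> submod R M P
     \<and> \<not> prod_sm R M (carrier R) (carrier M) \<subseteq> P
     \<and> (\<forall>r\<in>carrier R. \<forall>m\<in>carrier M. r \<odot>\<^bsub>M\<^esub> m \<in> P
              \<longrightarrow> m \<in> P \<or> smul_set M {r} (carrier M) \<subseteq> P)"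

definition beta_s :: "('a, 'c) ring_scheme \<Rightarrow> ('a, 'm) module \<Rightarrow> 'm set \<Rightarrow> 'm set" where
  "beta_s R M N = (if \<exists>P. prime_submod R M P \<and> N \<subseteq> P
     then \<Inter>{P. prime_submod R M P \<and> N \<subseteq> P} else carrier M)"

definition beta_s_co :: "('a, 'c) ring_scheme \<Rightarrow> ('a, 'm) module \<Rightarrow> 'm set \<Rightarrow> 'm set" where
  "beta_s_co R M N = (if \<exists>P. cprime_submod R M P \<and> N \<subseteq> P
     then \<Inter>{P. cprime_submod R M P \<and> N \<subseteq> P} else carrier M)"

definition E_M :: "('a, 'c) ring_scheme \<Rightarrow> ('a, 'm) module \<Rightarrow> 'm set \<Rightarrow> 'm set" where
  "E_M R M N = {r \<odot>\<^bsub>M\<^esub> m | r m. r \<in> carrier R \<and> m \<in> carrier M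
                 \<and> (\<exists>k::nat. k \<ge> 1 \<and> (r [^]\<^bsub>R\<^esub> k) \<odot>\<^bsub>M\<^esub> m \<in> N)}"

text \<open>Radical formula / complete radical formula, for all modules whose carrier
  lives in the type 'm.\<close>
definition radical_formula :: "('a, 'c) ring_scheme \<Rightarrow> ('a, 'm) module itself \<Rightarrow> bool" where
  "radical_formula R _ \<longleftrightarrow> (\<forall>M :: ('a, 'm) module. \<forall>N. lmodule R M \<and> submod R M N
      \<longrightarrow> mspan R M (E_M R M N) = beta_s R M N)"

definition complete_radical_formula :: "('a, 'c) ring_scheme \<Rightarrow> ('a, 'm) module itself \<Rightarrow> bool" where
  "complete_radical_formula R _ \<longleftrightarrow> (\<forall>M :: ('a, 'm) module. \<forall>N. lmodule R M \<and> submod R M N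
      \<longrightarrow> mspan R M (E_M R M N) = beta_s_co R M N)"

definition regular_module :: "('a, 'c) ring_scheme \<Rightarrow> ('a, 'a) module" where
  "regular_module R = \<lparr>carrier = carrier R, monoid.mult = monoid.mult R, monoid.one = \<one>\<^bsub>R\<^esub>,
      ring.zero = \<zero>\<^bsub>R\<^esub>, ring.add = ring.add R, module.smult = monoid.mult R\<rparr>"

definition simple_submod :: "('a, 'c) ring_scheme \<Rightarrow> ('a, 'm) module \<Rightarrow> 'm set \<Rightarrow> bool" where
  "simple_submod R M S \<longleftrightarrow> submod R M S \<and> S \<noteq> {\<zero>\<^bsub>M\<^esub>}
     \<and> (\<forall>K. submod R M K \<and> K \<subseteq> S \<longrightarrow> K = {\<zero>\<^bsub>M\<^esub>} \<or> K = S)"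

text \<open>R_R is the (internal) direct sum of a family of simple submodules.\<close>
definition semisimple_ring :: "('a, 'c) ring_scheme \<Rightarrow> bool" where
  "semisimple_ring R \<longleftrightarrow> ring R \<and> (\<exists>\<S>. (\<forall>S\<in>\<S>. simple_submod R (regular_module R) S)
     \<and> mspan R (regular_module R) (\<Union>\<S>) = carrier R
     \<and> (\<forall>S\<in>\<S>. S \<inter> mspan R (regular_module R) (\<Union>(\<S> - {S})) = {\<zero>\<^bsub>R\<^esub>}))"

definition prime_ideal_nc :: "('a, 'c) ring_scheme \<Rightarrow> 'a set \<Rightarrow> bool" where
  "prime_ideal_nc R P \<longleftrightarrow> ideal P R \<and> P \<noteq> carrier R
     \<and> (\<forall>A B. ideal A R \<and> ideal B R \<and> genideal R {a \<otimes>\<^bsub>R\<^esub> b | a b. a \<in> A \<and> b \<in> B} \<subseteq> P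
             \<longrightarrow> A \<subseteq> P \<or> B \<subseteq> P)"

definition prime_radical :: "('a, 'c) ring_scheme \<Rightarrow> 'a set" where
  "prime_radical R = carrier R \<inter> \<Inter>{P. prime_ideal_nc R P}"

definition nilpotents :: "('a, 'c) ring_scheme \<Rightarrow> 'a set" where
  "nilpotents R = {a \<in> carrier R. \<exists>n::nat. a [^]\<^bsub>R\<^esub> n = \<zero>\<^bsub>R\<^esub>}"

definition two_primal :: "('a, 'c) ring_scheme \<Rightarrow> bool" where
  "two_primal R \<longleftrightarrow> nilpotents R = prime_radical R"

end

theory Submission
  imports Defs
begin

no_notation Sum_Type.Plus (infixr \<open><+>\<close> 65)

text \<open>Completely prime submodules are always prime. For the converse, semisimplicity gives every
  left ideal \<open>L\<close> a right unit \<open>e \<in> L\<close>. Applied to the nilpotents, which form a left ideal because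
  \<open>R\<close> is 2-primal, this shows that \<open>R\<close> is reduced (the right unit is a nilpotent idempotent, hence
  zero), so idempotents are central and every left ideal is two-sided. Now if \<open>P\<close> is prime,
  \<open>r m \<in> P\<close> and \<open>m \<notin> P\<close>, the left ideal \<open>L = {a. a m \<in> P}\<close> is an ideal with \<open>L (R m) \<subseteq> P\<close>, so
  primeness forces \<open>L M \<subseteq> P\<close>, in particular \<open>r M \<subseteq> P\<close>. Hence both kinds of submodules coincide
  and so do \<open>\<beta>\<^sup>s\<close> and \<open>\<beta>\<^sup>s\<^sub>c\<^sub>o\<close>.\<close>

definition left_ideal :: "('a, 'c) ring_scheme \<Rightarrow> 'a set \<Rightarrow> bool" where
  "left_ideal R L \<longleftrightarrow> L \<subseteq> carrier R \<and> \<zero>\<^bsub>R\<^esub> \<in> L \<and> (\<forall>x\<in>L. \<forall>y\<in>L. x \<oplus>\<^bsub>R\<^esub> y \<in> L)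
     \<and> (\<forall>r\<in>carrier R. \<forall>x\<in>L. r \<otimes>\<^bsub>R\<^esub> x \<in> L)"

lemma submod_regular_module_iff: "submod R (regular_module R) L \<longleftrightarrow> left_ideal R L"
  by (simp add: submod_def left_ideal_def regular_module_def)

lemma simple_submod_regular_module_iff:
  "simple_submod R (regular_module R) S \<longleftrightarrow>
     left_ideal R S \<and> S \<noteq> {\<zero>\<^bsub>R\<^esub>} \<and> (\<forall>K. left_ideal R K \<and> K \<subseteq> S \<longrightarrow> K = {\<zero>\<^bsub>R\<^esub>} \<or> K = S)"
  by (simp add: simple_submod_def submod_regular_module_iff) (simp add: regular_module_def)

lemma mspan_subset: "submod R M P \<Longrightarrow> Y \<subseteq> P \<Longrightarrow> mspan R M Y \<subseteq> P"
  by (auto simp: mspan_def)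

lemma subset_mspan: "Y \<subseteq> carrier M \<Longrightarrow> Y \<subseteq> mspan R M Y"
  by (auto simp: mspan_def)

lemma mem_set_add_iff:
  fixes G (structure)
  shows "x \<in> A <+> B \<longleftrightarrow> (\<exists>a\<in>A. \<exists>b\<in>B. x = a \<oplus> b)"
  by (auto simp: set_add_def')

context ring begin

lemma left_ideal_a_inv:
  assumes "left_ideal R L" and "x \<in> L"
  shows "\<ominus> x \<in> L"
proof -
  have "x \<in> carrier R" using assms by (auto simp: left_ideal_def)
  then have "\<ominus> x = (\<ominus> \<one>) \<otimes> x" by (simp add: l_minus)
  then show ?thesis using assms by (simp add: left_ideal_def)
qed

lemma left_ideal_Int: "left_ideal R A \<Longrightarrow> left_ideal R B \<Longrightarrow> left_ideal R (A \<inter> B)"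
  by (auto simp: left_ideal_def)

lemma left_ideal_set_add:
  assumes A: "left_ideal R A" and B: "left_ideal R B"
  shows "left_ideal R (A <+> B)"
  unfolding left_ideal_def mem_set_add_iff
proof (intro conjI ballI)
  have "A \<subseteq> carrier R" "B \<subseteq> carrier R" using A B by (auto simp: left_ideal_def)
  then show "A <+> B \<subseteq> carrier R" by (rule set_add_closed)
  show "\<exists>a\<in>A. \<exists>b\<in>B. \<zero> = a \<oplus> b" using A B by (force simp: left_ideal_def)
next
  fix x y assume "x \<in> A <+> B" "y \<in> A <+> B"
  then obtain a b a' b' where ab: "a \<in> A" "b \<in> B" "a' \<in> A" "b' \<in> B"
    and xy: "x = a \<oplus> b" "y = a' \<oplus> b'" by (auto simp: mem_set_add_iff)
  moreover have "a \<in> carrier R" "b \<in> carrier R" "a' \<in> carrier R" "b' \<in> carrier R"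
    using A B ab by (auto simp: left_ideal_def)
  ultimately have "x \<oplus> y = (a \<oplus> a') \<oplus> (b \<oplus> b')" by (simp add: a_ac)
  moreover have "a \<oplus> a' \<in> A" "b \<oplus> b' \<in> B" using A B ab by (auto simp: left_ideal_def)
  ultimately show "\<exists>a\<in>A. \<exists>b\<in>B. x \<oplus> y = a \<oplus> b" by blast
next
  fix r x assume r: "r \<in> carrier R" and "x \<in> A <+> B"
  then obtain a b where ab: "a \<in> A" "b \<in> B" and x: "x = a \<oplus> b" by (auto simp: mem_set_add_iff)
  moreover have "a \<in> carrier R" "b \<in> carrier R" using A B ab by (auto simp: left_ideal_def)
  ultimately have "r \<otimes> x = r \<otimes> a \<oplus> r \<otimes> b" using r by (simp add: r_distr)
  moreover have "r \<otimes> a \<in> A" "r \<otimes> b \<in> B" using A B ab r by (auto simp: left_ideal_def)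
  ultimately show "\<exists>a\<in>A. \<exists>b\<in>B. r \<otimes> x = a \<oplus> b" by blast
qed

lemma left_ideal_foldr_set_add:
  "\<forall>S\<in>set Ss. left_ideal R S \<Longrightarrow> left_ideal R (foldr (set_add R) Ss {\<zero>})"
proof (induction Ss)
  case Nil
  show ?case by (simp add: left_ideal_def)
next
  case (Cons S Ss)
  then show ?case by (simp add: left_ideal_set_add)
qed

lemma foldr_set_add_append:
  assumes "\<forall>S\<in>set Ss. left_ideal R S" and "\<forall>S\<in>set Ts. left_ideal R S"
    and "x \<in> foldr (set_add R) Ss {\<zero>}" and y: "y \<in> foldr (set_add R) Ts {\<zero>}"
  shows "x \<oplus> y \<in> foldr (set_add R) (Ss @ Ts) {\<zero>}"
  using assms(1,3)
proof (induction Ss arbitrary: x)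
  case Nil
  have "y \<in> carrier R"
    using left_ideal_foldr_set_add[OF assms(2)] y by (auto simp: left_ideal_def)
  then show ?case using Nil.prems y by simp
next
  case (Cons S Ss)
  obtain a b where ab: "a \<in> S" "b \<in> foldr (set_add R) Ss {\<zero>}" and x: "x = a \<oplus> b"
    using Cons.prems(2) by (auto simp: mem_set_add_iff)
  have "a \<in> carrier R" "b \<in> carrier R" "y \<in> carrier R"
    using Cons.prems(1) ab left_ideal_foldr_set_add[of Ss] left_ideal_foldr_set_add[OF assms(2)] y
    by (auto simp: left_ideal_def)
  then have "x \<oplus> y = a \<oplus> (b \<oplus> y)" using x by (simp add: a_assoc)
  moreover have "b \<oplus> y \<in> foldr (set_add R) (Ss @ Ts) {\<zero>}" using Cons ab by simp
  ultimately show ?case using ab by (auto simp: mem_set_add_iff)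
qed

lemma mspan_Union_left_ideals_subset_finite_sums:
  assumes SS: "\<forall>S\<in>SS. left_ideal R S"
  shows "mspan R (regular_module R) (\<Union>SS) \<subseteq> (\<Union>Ss\<in>{Ss. set Ss \<subseteq> SS}. foldr (set_add R) Ss {\<zero>})"
    (is "_ \<subseteq> ?T")
proof (rule mspan_subset)
  have sums: "left_ideal R (foldr (set_add R) Ss {\<zero>})" if "set Ss \<subseteq> SS" for Ss
    using that SS by (intro left_ideal_foldr_set_add) blast
  have "left_ideal R ?T"
    unfolding left_ideal_def
  proof (intro conjI ballI)
    show "?T \<subseteq> carrier R" using sums unfolding left_ideal_def by blast
    show "\<zero> \<in> ?T" by (rule UN_I[of "[]"]) auto
  next
    fix x y assume "x \<in> ?T" "y \<in> ?T"
    then obtain Ss Ts where "set Ss \<subseteq> SS" "set Ts \<subseteq> SS"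
      "x \<in> foldr (set_add R) Ss {\<zero>}" "y \<in> foldr (set_add R) Ts {\<zero>}" by blast
    then show "x \<oplus> y \<in> ?T"
      using foldr_set_add_append[of Ss Ts x y] SS by (intro UN_I[of "Ss @ Ts"]) auto
  next
    fix r x assume "r \<in> carrier R" "x \<in> ?T"
    then show "r \<otimes> x \<in> ?T" using sums by (force simp: left_ideal_def)
  qed
  then show "submod R (regular_module R) ?T" by (simp add: submod_regular_module_iff)
  show "\<Union>SS \<subseteq> ?T"
  proof
    fix x assume "x \<in> \<Union>SS"
    then obtain S where S: "S \<in> SS" "x \<in> S" by blast
    then have "x \<in> carrier R" "\<zero> \<in> S" using SS by (auto simp: left_ideal_def)
    then have "x \<in> foldr (set_add R) [S] {\<zero>}" using S by (force simp: mem_set_add_iff)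
    then show "x \<in> ?T" using S by (intro UN_I[of "[S]"]) auto
  qed
qed

text \<open>A simple left ideal \<open>S\<close> either lies in \<open>L + C\<close> or meets it trivially, in which case
  \<open>C + S\<close> is again a complement of \<open>L\<close>.\<close>

lemma left_ideal_complement_in_sum_of_simples:
  assumes L: "left_ideal R L" and Ss: "\<forall>S\<in>set Ss. simple_submod R (regular_module R) S"
  shows "\<exists>C. left_ideal R C \<and> L \<inter> C \<subseteq> {\<zero>} \<and> foldr (set_add R) Ss {\<zero>} \<subseteq> L <+> C"
  using Ss
proof (induction Ss)
  case Nil
  have "left_ideal R {\<zero>}" by (auto simp: left_ideal_def)
  moreover have "{\<zero>} \<subseteq> L <+> {\<zero>}" using L by (force simp: mem_set_add_iff left_ideal_def)
  ultimately show ?case by auto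
next
  case (Cons S Ss)
  then obtain C where C: "left_ideal R C" "L \<inter> C \<subseteq> {\<zero>}" "foldr (set_add R) Ss {\<zero>} \<subseteq> L <+> C"
    by auto
  have S: "left_ideal R S" "\<And>K. left_ideal R K \<Longrightarrow> K \<subseteq> S \<Longrightarrow> K = {\<zero>} \<or> K = S"
    using Cons.prems by (auto simp: simple_submod_regular_module_iff)
  have LC: "left_ideal R (L <+> C)" using left_ideal_set_add L C(1) by blast
  have carr: "L \<subseteq> carrier R" "C \<subseteq> carrier R" "S \<subseteq> carrier R"
    using L C(1) S(1) by (auto simp: left_ideal_def)
  have "S \<inter> (L <+> C) = {\<zero>} \<or> S \<inter> (L <+> C) = S"
    using S left_ideal_Int[OF S(1) LC] by blast
  then show ?case
  proof
    assume "S \<inter> (L <+> C) = S"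
    have "foldr (set_add R) (S # Ss) {\<zero>} \<subseteq> L <+> C"
    proof
      fix x assume "x \<in> foldr (set_add R) (S # Ss) {\<zero>}"
      then obtain s t where "s \<in> S" "t \<in> foldr (set_add R) Ss {\<zero>}" "x = s \<oplus> t"
        by (auto simp: mem_set_add_iff)
      then show "x \<in> L <+> C"
        using \<open>S \<inter> (L <+> C) = S\<close> C(3) LC unfolding left_ideal_def by blast
    qed
    then show ?thesis using C by blast
  next
    assume S0: "S \<inter> (L <+> C) = {\<zero>}"
    have "L \<inter> (C <+> S) \<subseteq> {\<zero>}"
    proof
      fix l assume "l \<in> L \<inter> (C <+> S)"
      then obtain c s where l: "l \<in> L" "c \<in> C" "s \<in> S" "l = c \<oplus> s"
        by (auto simp: mem_set_add_iff)
      have cs: "c \<in> carrier R" "s \<in> carrier R" using l carr by auto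
      then have "s = \<ominus> c \<oplus> l" using r_neg1[OF cs] l(4) by simp
      also have "\<dots> = l \<oplus> \<ominus> c" using l carr by (intro a_comm) auto
      finally have "s \<in> L <+> C" using l left_ideal_a_inv[OF C(1)] by (auto simp: mem_set_add_iff)
      then have "s = \<zero>" using S0 l by blast
      then have "l = c" using l carr by auto
      then show "l \<in> {\<zero>}" using C(2) l by blast
    qed
    moreover have "foldr (set_add R) (S # Ss) {\<zero>} \<subseteq> L <+> (C <+> S)"
    proof
      fix x assume "x \<in> foldr (set_add R) (S # Ss) {\<zero>}"
      then obtain s t where st: "s \<in> S" "t \<in> foldr (set_add R) Ss {\<zero>}" "x = s \<oplus> t"
        by (auto simp: mem_set_add_iff)
      then obtain l c where lc: "l \<in> L" "c \<in> C" "t = l \<oplus> c"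
        using subsetD[OF C(3) st(2)] by (auto simp: mem_set_add_iff)
      have "s \<in> carrier R" "l \<in> carrier R" "c \<in> carrier R" using st lc carr by auto
      then have "x = l \<oplus> (c \<oplus> s)" using st(3) lc(3) by (simp add: a_ac)
      moreover have "c \<oplus> s \<in> C <+> S" using st lc by (auto simp: mem_set_add_iff)
      ultimately show "x \<in> L <+> (C <+> S)"
        using lc(1) by (intro iffD2[OF mem_set_add_iff]) blast
    qed
    ultimately show ?thesis using left_ideal_set_add[OF C(1) S(1)] by blast
  qed
qed

text \<open>Writing \<open>\<one> = e \<oplus> f\<close> along \<open>R = L \<oplus> C\<close> gives, for \<open>x \<in> L\<close>, \<open>x \<otimes> f = x \<ominus> x \<otimes> e \<in> L \<inter> C\<close>.\<close>

lemma semisimple_left_ideal_right_unit: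
  assumes ss: "semisimple_ring R" and L: "left_ideal R L"
  shows "\<exists>e\<in>L. \<forall>x\<in>L. x \<otimes> e = x"
proof -
  obtain SS where SS: "\<forall>S\<in>SS. simple_submod R (regular_module R) S"
    "mspan R (regular_module R) (\<Union>SS) = carrier R"
    using ss unfolding semisimple_ring_def by blast
  have "\<forall>S\<in>SS. left_ideal R S" using SS(1) by (auto simp: simple_submod_regular_module_iff)
  then obtain Ss where Ss: "set Ss \<subseteq> SS" "\<one> \<in> foldr (set_add R) Ss {\<zero>}"
    using mspan_Union_left_ideals_subset_finite_sums SS(2) by blast
  obtain C where C: "left_ideal R C" "L \<inter> C \<subseteq> {\<zero>}" "foldr (set_add R) Ss {\<zero>} \<subseteq> L <+> C"
    using left_ideal_complement_in_sum_of_simples[OF L, of Ss] Ss SS(1) by auto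
  obtain e f where ef: "e \<in> L" "f \<in> C" "\<one> = e \<oplus> f"
    using subsetD[OF C(3) Ss(2)] by (auto simp: mem_set_add_iff)
  have carr: "L \<subseteq> carrier R" "C \<subseteq> carrier R" using L C(1) by (auto simp: left_ideal_def)
  show ?thesis
  proof (intro bexI[OF _ ef(1)] ballI)
    fix x assume x: "x \<in> L"
    have xef: "x \<otimes> e \<in> L" "x \<otimes> f \<in> C" using L C(1) ef x carr by (auto simp: left_ideal_def)
    have c: "x \<in> carrier R" "e \<in> carrier R" "f \<in> carrier R" using x ef carr by auto
    then have split: "x \<otimes> e \<oplus> x \<otimes> f = x" using r_distr[of e f x] ef(3)[symmetric] by simp
    have "x \<otimes> f = \<ominus> (x \<otimes> e) \<oplus> x"
      using r_neg1[of "x \<otimes> e" "x \<otimes> f"] c by (simp add: split)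
    also have "\<dots> \<in> L" using L x xef(1) left_ideal_a_inv[OF L] by (simp add: left_ideal_def)
    finally have "x \<otimes> f = \<zero>" using C(2) xef(2) by blast
    then show "x \<otimes> e = x" using split c by simp
  qed
qed

lemma left_ideal_prime_radical: "left_ideal R (prime_radical R)"
proof -
  have "ideal P R" if "prime_ideal_nc R P" for P using that by (simp add: prime_ideal_nc_def)
  then show ?thesis
    unfolding left_ideal_def prime_radical_def
    by (blast intro: ideal.I_l_closed additive_subgroup.a_closed additive_subgroup.zero_closed
        ideal.axioms(1))
qed

lemma semisimple_two_primal_nilpotent_eq_zero:
  assumes ss: "semisimple_ring R" and tp: "two_primal R"
    and a: "a \<in> carrier R" and an: "a [^] (n::nat) = \<zero>"
  shows "a = \<zero>"
proof -
  have N: "left_ideal R (nilpotents R)"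
    using tp left_ideal_prime_radical by (simp add: two_primal_def)
  then obtain e where e: "e \<in> nilpotents R" "\<forall>x\<in>nilpotents R. x \<otimes> e = x"
    using semisimple_left_ideal_right_unit[OF ss] by blast
  obtain m :: nat where ec: "e \<in> carrier R" and m: "e [^] m = \<zero>"
    using e(1) unfolding nilpotents_def by blast
  have idem: "e \<otimes> e = e" using e by blast
  have "e [^] Suc k = e" for k
    by (induction k) (use idem ec in simp_all)
  then have "e = e [^] m \<otimes> e" by (metis nat_pow_Suc)
  then have "e = \<zero>" using m ec by simp
  moreover have "a \<in> nilpotents R" using a an by (auto simp: nilpotents_def)
  ultimately show ?thesis using e(2) a by force
qed

text \<open>Both \<open>e \<otimes> x \<otimes> (\<one> \<ominus> e)\<close> and \<open>(\<one> \<ominus> e) \<otimes> x \<otimes> e\<close> square to zero because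
  \<open>(\<one> \<ominus> e) \<otimes> e = e \<otimes> (\<one> \<ominus> e) = \<zero>\<close>; so both \<open>e \<otimes> x\<close> and \<open>x \<otimes> e\<close> equal \<open>e \<otimes> x \<otimes> e\<close>.\<close>

lemma reduced_idempotent_central:
  assumes reduced: "\<And>u. u \<in> carrier R \<Longrightarrow> u \<otimes> u = \<zero> \<Longrightarrow> u = \<zero>"
    and e: "e \<in> carrier R" "e \<otimes> e = e" and x: "x \<in> carrier R"
  shows "e \<otimes> x = x \<otimes> e"
proof -
  define e' where "e' = \<one> \<ominus> e"
  have e': "e' \<in> carrier R" "e' \<otimes> e = \<zero>" "e \<otimes> e' = \<zero>"
    using e by (simp_all add: e'_def minus_eq l_distr r_distr l_minus r_minus r_neg)
  have "e \<otimes> x \<otimes> e' = \<zero>"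
  proof (rule reduced)
    have "(e \<otimes> x \<otimes> e') \<otimes> (e \<otimes> x \<otimes> e') = e \<otimes> x \<otimes> (e' \<otimes> e) \<otimes> x \<otimes> e'"
      using e(1) e'(1) x by (simp add: m_assoc)
    also have "\<dots> = \<zero>" using e e' x by (simp only: e'(2,3) l_null r_null m_closed)
    finally show "(e \<otimes> x \<otimes> e') \<otimes> (e \<otimes> x \<otimes> e') = \<zero>" .
  qed (use e e' x in simp)
  moreover have "e \<otimes> x \<otimes> e' = e \<otimes> x \<ominus> e \<otimes> x \<otimes> e"
    using e x by (simp add: e'_def minus_eq r_distr r_minus)
  ultimately have left: "e \<otimes> x = e \<otimes> x \<otimes> e" using e x by simp
  have "e' \<otimes> x \<otimes> e = \<zero>"
  proof (rule reduced)
    have "(e' \<otimes> x \<otimes> e) \<otimes> (e' \<otimes> x \<otimes> e) = e' \<otimes> x \<otimes> (e \<otimes> e') \<otimes> x \<otimes> e"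
      using e(1) e'(1) x by (simp add: m_assoc)
    also have "\<dots> = \<zero>" using e e' x by (simp only: e'(2,3) l_null r_null m_closed)
    finally show "(e' \<otimes> x \<otimes> e) \<otimes> (e' \<otimes> x \<otimes> e) = \<zero>" .
  qed (use e e' x in simp)
  moreover have "e' \<otimes> x \<otimes> e = x \<otimes> e \<ominus> e \<otimes> x \<otimes> e"
    using e x by (simp add: e'_def minus_eq l_distr l_minus)
  ultimately have right: "x \<otimes> e = e \<otimes> x \<otimes> e" using e x by simp
  show ?thesis using left right by simp
qed

lemma left_ideal_with_central_right_unit_is_ideal:
  assumes L: "left_ideal R L" and e: "e \<in> L" "\<forall>x\<in>L. x \<otimes> e = x"
    and central: "\<forall>t\<in>carrier R. e \<otimes> t = t \<otimes> e"
  shows "ideal L R"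
proof (rule idealI)
  have carr: "L \<subseteq> carrier R" using L by (simp add: left_ideal_def)
  show "ring R" ..
  show "subgroup L (add_monoid R)"
    using L e(1) left_ideal_a_inv[OF L] by (intro add.subgroupI) (auto simp: left_ideal_def)
  show "\<And>a t. a \<in> L \<Longrightarrow> t \<in> carrier R \<Longrightarrow> t \<otimes> a \<in> L" using L by (simp add: left_ideal_def)
  show "a \<otimes> t \<in> L" if a: "a \<in> L" and t: "t \<in> carrier R" for a t
  proof -
    have c: "a \<in> carrier R" "e \<in> carrier R" using a e(1) carr by auto
    have "(a \<otimes> t) \<otimes> e = a \<otimes> (e \<otimes> t)" using c t central by (simp add: m_assoc)
    also have "\<dots> = a \<otimes> t" using e(2) a c t by (simp flip: m_assoc)
    finally have "(a \<otimes> t) \<otimes> e = a \<otimes> t" .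
    moreover have "(a \<otimes> t) \<otimes> e \<in> L" using L e(1) c t by (simp add: left_ideal_def)
    ultimately show ?thesis by simp
  qed
qed

lemma semisimple_two_primal_left_ideal_is_ideal:
  assumes ss: "semisimple_ring R" and tp: "two_primal R" and L: "left_ideal R L"
  shows "ideal L R"
proof -
  obtain e where e: "e \<in> L" "\<forall>x\<in>L. x \<otimes> e = x"
    using semisimple_left_ideal_right_unit[OF ss L] by blast
  have ec: "e \<in> carrier R" using L e(1) by (auto simp: left_ideal_def)
  have reduced: "u = \<zero>" if "u \<in> carrier R" "u \<otimes> u = \<zero>" for u
    using semisimple_two_primal_nilpotent_eq_zero[OF ss tp, of u 2] that
    by (simp add: numeral_2_eq_2)
  have "\<forall>t\<in>carrier R. e \<otimes> t = t \<otimes> e"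
    using reduced_idempotent_central[OF reduced ec] e by blast
  with L e show ?thesis by (rule left_ideal_with_central_right_unit_is_ideal)
qed

end

locale left_module = R?: ring R + M?: abelian_group M
  for R :: "('a, 'c) ring_scheme" (structure) and M :: "('a, 'm) module" (structure) +
  assumes smult_closed [simp, intro]:
      "\<lbrakk>a \<in> carrier R; x \<in> carrier M\<rbrakk> \<Longrightarrow> a \<odot>\<^bsub>M\<^esub> x \<in> carrier M"
    and smult_l_distr:
      "\<lbrakk>a \<in> carrier R; b \<in> carrier R; x \<in> carrier M\<rbrakk> \<Longrightarrow>
        (a \<oplus> b) \<odot>\<^bsub>M\<^esub> x = a \<odot>\<^bsub>M\<^esub> x \<oplus>\<^bsub>M\<^esub> b \<odot>\<^bsub>M\<^esub> x"
    and smult_r_distr: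
      "\<lbrakk>a \<in> carrier R; x \<in> carrier M; y \<in> carrier M\<rbrakk> \<Longrightarrow>
        a \<odot>\<^bsub>M\<^esub> (x \<oplus>\<^bsub>M\<^esub> y) = a \<odot>\<^bsub>M\<^esub> x \<oplus>\<^bsub>M\<^esub> a \<odot>\<^bsub>M\<^esub> y"
    and smult_assoc1:
      "\<lbrakk>a \<in> carrier R; b \<in> carrier R; x \<in> carrier M\<rbrakk> \<Longrightarrow>
        (a \<otimes> b) \<odot>\<^bsub>M\<^esub> x = a \<odot>\<^bsub>M\<^esub> (b \<odot>\<^bsub>M\<^esub> x)"
    and smult_one [simp]: "x \<in> carrier M \<Longrightarrow> \<one> \<odot>\<^bsub>M\<^esub> x = x"

lemma lmodule_imp_left_module: "lmodule R M \<Longrightarrow> left_module R M"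
  by (auto simp: lmodule_def module_axioms_def left_module_def left_module_axioms_def)

context left_module begin

lemma smult_l_null [simp]: "x \<in> carrier M \<Longrightarrow> \<zero> \<odot>\<^bsub>M\<^esub> x = \<zero>\<^bsub>M\<^esub>"
proof -
  assume x: "x \<in> carrier M"
  then have "\<zero> \<odot>\<^bsub>M\<^esub> x \<oplus>\<^bsub>M\<^esub> \<zero> \<odot>\<^bsub>M\<^esub> x = \<zero> \<odot>\<^bsub>M\<^esub> x \<oplus>\<^bsub>M\<^esub> \<zero>\<^bsub>M\<^esub>"
    using smult_l_distr[of \<zero> \<zero> x] by simp
  then show ?thesis using x by (simp add: M.add.l_cancel)
qed

lemma left_ideal_residual:
  assumes P: "submod R M P" and m: "m \<in> carrier M"
  shows "left_ideal R {a \<in> carrier R. a \<odot>\<^bsub>M\<^esub> m \<in> P}"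
  using assms by (auto simp: left_ideal_def submod_def smult_l_distr smult_assoc1)

lemma submod_cyclic:
  assumes m: "m \<in> carrier M"
  shows "submod R M {t \<odot>\<^bsub>M\<^esub> m | t. t \<in> carrier R}"
  unfolding submod_def
proof (intro conjI ballI)
  show "{t \<odot>\<^bsub>M\<^esub> m | t. t \<in> carrier R} \<subseteq> carrier M" using m by auto
  show "\<zero>\<^bsub>M\<^esub> \<in> {t \<odot>\<^bsub>M\<^esub> m | t. t \<in> carrier R}" using m smult_l_null[OF m, symmetric] by blast
next
  fix x y assume "x \<in> {t \<odot>\<^bsub>M\<^esub> m | t. t \<in> carrier R}" "y \<in> {t \<odot>\<^bsub>M\<^esub> m | t. t \<in> carrier R}"
  then obtain s t where "s \<in> carrier R" "t \<in> carrier R" "x = s \<odot>\<^bsub>M\<^esub> m" "y = t \<odot>\<^bsub>M\<^esub> m"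
    by blast
  then show "x \<oplus>\<^bsub>M\<^esub> y \<in> {t \<odot>\<^bsub>M\<^esub> m | t. t \<in> carrier R}"
    using m smult_l_distr[of s t m] by (intro CollectI exI[of _ "s \<oplus> t"]) auto
next
  fix r x assume "r \<in> carrier R" "x \<in> {t \<odot>\<^bsub>M\<^esub> m | t. t \<in> carrier R}"
  then obtain t where "t \<in> carrier R" "x = t \<odot>\<^bsub>M\<^esub> m" by blast
  then show "r \<odot>\<^bsub>M\<^esub> x \<in> {t \<odot>\<^bsub>M\<^esub> m | t. t \<in> carrier R}"
    using m smult_assoc1[of r t m] \<open>r \<in> carrier R\<close> by (intro CollectI exI[of _ "r \<otimes> t"]) auto
qed

lemma prod_sm_subset_iff:
  assumes P: "submod R M P" and "A \<subseteq> carrier R" and "K \<subseteq> carrier M"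
  shows "prod_sm R M A K \<subseteq> P \<longleftrightarrow> smul_set M A K \<subseteq> P"
proof -
  have "smul_set M A K \<subseteq> carrier M" using assms(2,3) by (auto simp: smul_set_def)
  then show ?thesis
    using subset_mspan[of "smul_set M A K" M R] mspan_subset[OF P] by (auto simp: prod_sm_def)
qed

lemma cprime_submod_imp_prime_submod:
  assumes P: "cprime_submod R M P"
  shows "prime_submod R M P"
proof -
  have sP: "submod R M P"
    and cP: "\<And>r m. r \<in> carrier R \<Longrightarrow> m \<in> carrier M \<Longrightarrow> r \<odot>\<^bsub>M\<^esub> m \<in> P \<Longrightarrow>
              m \<in> P \<or> smul_set M {r} (carrier M) \<subseteq> P"
    using P by (auto simp: cprime_submod_def)
  have "prod_sm R M A (carrier M) \<subseteq> P"
    if A: "ideal A R" and K: "submod R M K" and AK: "prod_sm R M A K \<subseteq> P" and k: "k \<in> K" "k \<notin> P"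
    for A K k
  proof -
    have Ac: "A \<subseteq> carrier R" using A by (simp add: ideal_def additive_subgroup_def subgroup_def)
    have Kc: "K \<subseteq> carrier M" using K by (simp add: submod_def)
    have "smul_set M A K \<subseteq> P" using AK prod_sm_subset_iff[OF sP Ac Kc] by simp
    then have "smul_set M {a} (carrier M) \<subseteq> P" if "a \<in> A" for a
      using cP[of a k] that k Ac Kc by (auto simp: smul_set_def)
    then have "smul_set M A (carrier M) \<subseteq> P" by (auto simp: smul_set_def)
    then show ?thesis using prod_sm_subset_iff[OF sP Ac] by simp
  qed
  then show ?thesis using P by (auto simp: prime_submod_def cprime_submod_def)
qed

lemma prime_submod_imp_cprime_submod:
  assumes ss: "semisimple_ring R" and tp: "two_primal R" and P: "prime_submod R M P"
  shows "cprime_submod R M P"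
proof -
  have sP: "submod R M P"
    and pP: "\<And>A K. ideal A R \<Longrightarrow> submod R M K \<Longrightarrow> prod_sm R M A K \<subseteq> P
              \<Longrightarrow> K \<subseteq> P \<or> prod_sm R M A (carrier M) \<subseteq> P"
    using P by (auto simp: prime_submod_def)
  have "smul_set M {r} (carrier M) \<subseteq> P"
    if r: "r \<in> carrier R" and m: "m \<in> carrier M" and rm: "r \<odot>\<^bsub>M\<^esub> m \<in> P" and nm: "m \<notin> P"
    for r m
  proof -
    define L where "L = {a \<in> carrier R. a \<odot>\<^bsub>M\<^esub> m \<in> P}"
    define K where "K = {t \<odot>\<^bsub>M\<^esub> m | t. t \<in> carrier R}"
    have L: "ideal L R"
      unfolding L_def by (rule semisimple_two_primal_left_ideal_is_ideal[OF ss tp left_ideal_residual[OF sP m]])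
    have Lc: "L \<subseteq> carrier R" by (auto simp: L_def)
    have K: "submod R M K" unfolding K_def using m by (rule submod_cyclic)
    have "smul_set M L K \<subseteq> P"
    proof
      fix y assume "y \<in> smul_set M L K"
      then obtain a t where a: "a \<in> L" and t: "t \<in> carrier R" and y: "y = a \<odot>\<^bsub>M\<^esub> (t \<odot>\<^bsub>M\<^esub> m)"
        by (auto simp: smul_set_def K_def)
      have "a \<otimes> t \<in> L" using ideal.I_r_closed[OF L a t] .
      then show "y \<in> P" using y a t m Lc smult_assoc1[of a t m] by (auto simp: L_def)
    qed
    then have "K \<subseteq> P \<or> prod_sm R M L (carrier M) \<subseteq> P"
      using pP[OF L K] prod_sm_subset_iff[OF sP Lc] K by (auto simp: submod_def)
    moreover have "m \<in> K" unfolding K_def using m smult_one[OF m] by force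
    ultimately have "smul_set M L (carrier M) \<subseteq> P"
      using nm prod_sm_subset_iff[OF sP Lc] by blast
    moreover have "r \<in> L" using r rm by (simp add: L_def)
    ultimately show ?thesis by (auto simp: smul_set_def)
  qed
  then show ?thesis using P by (auto simp: prime_submod_def cprime_submod_def)
qed

lemma beta_s_eq_beta_s_co:
  assumes "semisimple_ring R" and "two_primal R"
  shows "beta_s R M N = beta_s_co R M N"
proof -
  have "prime_submod R M = cprime_submod R M"
    using prime_submod_imp_cprime_submod[OF assms] cprime_submod_imp_prime_submod by blast
  then show ?thesis unfolding beta_s_def beta_s_co_def by (simp only:)
qed

end

theorem proposition4p25:
  fixes R :: "('a, 'c) ring_scheme"
  assumes "ring R" and "semisimple_ring R" and "two_primal R"
  shows "complete_radical_formula R TYPE(('a, 'm) module) \<longleftrightarrow> radical_formula R TYPE(('a, 'm) module)"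
proof -
  have "beta_s R M N = beta_s_co R M N" if "lmodule R M" for M :: "('a, 'm) module" and N
  proof -
    interpret left_module R M using that by (rule lmodule_imp_left_module)
    show ?thesis using assms(2,3) by (rule beta_s_eq_beta_s_co)
  qed
  then show ?thesis unfolding complete_radical_formula_def radical_formula_def by auto
qed

end
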